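(* Let $n$ be a positive integer and $q=p^k$ a prime power with $k\ge2$. Then there are at least $p^k(p-1)^k/2^k-q$ intervals $L\subseteq[q-1]$ such that every $q$-modular $L$-differencing Sperner system $\mathcal{F}\subseteq2^{[n]}$ satisfies $$|\mathcal{F}|\le\sum_{i=0}^{|L|}\binom{n-1}{i}.$$
   Context: An interval is a nonempty set of consecutive integers. For $L\subseteq[q-1]$, $\mathcal{F}\subseteq2^{[n]}$ is $q$-modular $L$-differencing Sperner if for all distinct $A,B\in\mathcal{F}$, $|A\setminus B|\equiv\ell\pmod q$ for some $\ell\in L$. *)

theory Defs
  imports Complex_Main "HOL-Computational_Algebra.Primes"
begin

text \<open>An interval is a nonempty set of consecutive integers (here natural numbers,
  since all intervals considered lie in [q-1] = {1..q-1}).\<close>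
definition is_interval :: "nat set \<Rightarrow> bool" where
  "is_interval L \<longleftrightarrow> (\<exists>a b. a \<le> b \<and> L = {a..b})"

definition modular_L_differencing_Sperner ::
  "nat \<Rightarrow> nat set \<Rightarrow> nat set set \<Rightarrow> bool" where
  "modular_L_differencing_Sperner q L F \<longleftrightarrow>
     (\<forall>A\<in>F. \<forall>B\<in>F. A \<noteq> B \<longrightarrow> (\<exists>l\<in>L. card (A - B) mod q = l mod q))"

end

theory Submission
  imports Defs "HOL-Number_Theory.Cong" "Jordan_Normal_Form.Determinant"
begin

text \<open>Fix \<open>s < q\<close> and \<open>d \<ge> 1\<close> with \<open>p\<close> not dividing \<open>s choose d\<close>, and let \<open>L = {q - s..q - s + d - 1}\<close>.
  For a family \<open>A\<^sub>1, \<dots>, A\<^sub>m\<close> the integer matrix \<open>M\<^sub>i\<^sub>j = (card ((A\<^sub>i - {n}) - A\<^sub>j) + s) choose d\<close>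
  factors through the subsets of \<open>[n - 1]\<close> of size at most \<open>d\<close>, so it is singular as soon as \<open>m\<close>
  exceeds \<open>\<Sum>i\<le>d. (n - 1) choose i\<close>. If the family is \<open>q\<close>-modular \<open>L\<close>-differencing, then
  \<open>(card (A\<^sub>i - A\<^sub>j) + s) mod q < d\<close> for \<open>i \<noteq> j\<close>, which forces \<open>p\<close> to divide the binomial coefficient;
  so \<open>M\<close> is block triangular mod \<open>p\<close> (according to whether \<open>n \<in> A\<^sub>i\<close>) with diagonal entries
  \<open>s choose d\<close>, and \<open>det M\<close> is not divisible by \<open>p\<close>.
  Distinct pairs \<open>(s, d)\<close> give distinct intervals, and by Lucas' theorem at least \<open>(p (p - 1) / 2) ^ k\<close>
  pairs with \<open>s < p ^ k\<close> have \<open>p\<close> not dividing \<open>s choose d\<close>; at most \<open>q\<close> of them have \<open>d = 0\<close>.\<close>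

section \<open>Binomial coefficients modulo a prime\<close>

lemma le_if_not_dvd_choose:
  fixes p s d :: nat
  assumes "\<not> p dvd s choose d"
  shows "d \<le> s"
  using assms by (metis binomial_eq_0 dvd_0_right not_le)

lemma prime_dvd_choose_prime_power_mult:
  fixes p k t j :: nat
  assumes "prime p" and "0 < j" and "j < p ^ k"
  shows "p dvd (p ^ k * t) choose j"
proof (rule ccontr)
  assume not_dvd: "\<not> p dvd (p ^ k * t) choose j"
  have "j * ((p ^ k * t) choose j) = p ^ k * t * ((p ^ k * t - 1) choose (j - 1))"
    using \<open>0 < j\<close> by (rule times_binomial_minus1_eq)
  then have "p ^ k dvd j * ((p ^ k * t) choose j)"
    by (metis dvd_mult2 dvd_triv_left)
  moreover have "coprime (p ^ k) ((p ^ k * t) choose j)"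
    using not_dvd \<open>prime p\<close> by (simp add: prime_imp_coprime)
  ultimately have "p ^ k dvd j"
    using coprime_dvd_mult_left_iff by blast
  with assms(2,3) show False
    by (meson nat_dvd_not_less)
qed

lemma prime_dvd_choose_if_mod_less:
  fixes p k x d :: nat
  assumes "prime p" and "x mod p ^ k < d" and "d < p ^ k"
  shows "p dvd x choose d"
proof -
  let ?q = "p ^ k"
  have "x choose d = (\<Sum>j\<le>d. ((?q * (x div ?q)) choose j) * ((x mod ?q) choose (d - j)))"
    by (subst vandermonde) simp
  also have "p dvd \<dots>"
  proof (rule dvd_sum)
    fix j
    assume "j \<in> {..d}"
    show "p dvd ((?q * (x div ?q)) choose j) * ((x mod ?q) choose (d - j))"
    proof (cases "j = 0")
      case True
      with assms(2) show ?thesis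
        by (simp add: binomial_eq_0)
    next
      case False
      with \<open>j \<in> {..d}\<close> assms(1,3) show ?thesis
        by (simp add: prime_dvd_choose_prime_power_mult)
    qed
  qed
  finally show ?thesis .
qed

lemma choose_prime_cong:
  fixes p i :: nat
  assumes "prime p"
  shows "[p choose i = (if i = 0 \<or> i = p then 1 else 0)] (mod p)"
proof -
  consider "i = 0 \<or> i = p" | "0 < i" "i < p" | "p < i"
    by linarith
  then show ?thesis
  proof cases
    case 2
    with assms show ?thesis
      by (auto simp: cong_0_iff intro: dvd_choose_prime)
  qed (auto simp: binomial_eq_0)
qed

text \<open>The coefficientwise form of \<open>(1 + X) ^ (m + p) \<equiv> (1 + X) ^ m * (1 + X ^ p) (mod p)\<close>.\<close>
lemma choose_add_prime_cong:
  fixes p m j :: nat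
  assumes "prime p"
  shows "[(m + p) choose j = (m choose j) + (if p \<le> j then m choose (j - p) else 0)] (mod p)"
proof -
  have "p > 0"
    using assms prime_gt_0_nat by blast
  have "(m + p) choose j = (\<Sum>i\<le>j. (m choose i) * (p choose (j - i)))"
    by (rule vandermonde[symmetric])
  also have "[\<dots> = (\<Sum>i\<le>j. (m choose i) * (if j - i = 0 \<or> j - i = p then 1 else 0))] (mod p)"
    by (intro cong_sum cong_mult cong_refl choose_prime_cong assms)
  also have "(\<Sum>i\<le>j. (m choose i) * (if j - i = 0 \<or> j - i = p then 1 else 0))
      = (\<Sum>i\<le>j. (if i = j then m choose i else 0) + (if p \<le> j \<and> i = j - p then m choose i else 0))"
    using \<open>p > 0\<close> by (intro sum.cong) auto
  also have "\<dots> = (m choose j) + (if p \<le> j then m choose (j - p) else 0)"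
    by (cases "p \<le> j") (simp_all add: sum.distrib)
  finally show ?thesis .
qed

lemma choose_prime_mult_cong:
  fixes p s j :: nat
  assumes "prime p"
  shows "[(p * s) choose j = (if p dvd j then s choose (j div p) else 0)] (mod p)"
proof (induction s arbitrary: j)
  case 0
  then show ?case
    by (cases "j = 0") (auto simp: binomial_eq_0)
next
  case (Suc s)
  have "p > 0"
    using assms prime_gt_0_nat by blast
  have "[(p * Suc s) choose j = ((p * s) choose j) + (if p \<le> j then (p * s) choose (j - p) else 0)] (mod p)"
    (is "[_ = ?pascal_mod_p] (mod p)")
    using choose_add_prime_cong[OF assms, of "p * s" j] by (simp add: add.commute)
  also have "[?pascal_mod_p = (if p dvd j then s choose (j div p) else 0)
      + (if p \<le> j then if p dvd (j - p) then s choose ((j - p) div p) else 0 else 0)] (mod p)"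
    (is "[_ = ?by_IH] (mod p)")
    by (intro cong_add Suc.IH) (use Suc.IH[of "j - p"] in auto)
  also have "?by_IH = (if p dvd j then Suc s choose (j div p) else 0)"
  proof (cases "p dvd j")
    case True
    then obtain c where j: "j = p * c"
      by blast
    show ?thesis
    proof (cases c)
      case 0
      with j \<open>p > 0\<close> show ?thesis
        by simp
    next
      case (Suc c')
      with j \<open>p > 0\<close> have "p \<le> j" "j div p = Suc c'" "j - p = p * c'"
        by simp_all
      with \<open>p > 0\<close> \<open>p dvd j\<close> show ?thesis
        by simp
    qed
  next
    case False
    have "\<not> p dvd (j - p)" if "p \<le> j"
    proof
      assume "p dvd (j - p)"
      then have "p dvd (j - p) + p"
        by simp
      with that False show False
        by simp
    qed
    with False show ?thesis
      by auto
  qed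
  finally show ?case .
qed

lemma choose_prime_digit_cong:
  fixes p s s0 d d0 :: nat
  assumes "prime p" and "s0 < p" and "d0 < p"
  shows "[(p * s + s0) choose (p * d + d0) = (s choose d) * (s0 choose d0)] (mod p)"
proof -
  let ?r = "p * d + d0"
  have "p > 0"
    using assms(1) prime_gt_0_nat by blast
  have "(p * s + s0) choose ?r = (\<Sum>i\<le>?r. ((p * s) choose i) * (s0 choose (?r - i)))"
    by (rule vandermonde[symmetric])
  also have "[\<dots> = (\<Sum>i\<le>?r. (if p dvd i then s choose (i div p) else 0) * (s0 choose (?r - i)))] (mod p)"
    by (intro cong_sum cong_mult cong_refl choose_prime_mult_cong assms(1))
  also have "(\<Sum>i\<le>?r. (if p dvd i then s choose (i div p) else 0) * (s0 choose (?r - i)))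
      = (\<Sum>i\<le>?r. if i = p * d then (s choose d) * (s0 choose d0) else 0)"
  proof (rule sum.cong[OF refl])
    fix i
    assume "i \<in> {..?r}"
    then have "i < p * (d + 1)"
      using assms(3) by simp
    consider "\<not> p dvd i" | c where "i = p * c" "c < d" | "i = p * d"
    proof (cases "p dvd i")
      case True
      then obtain c where "i = p * c"
        by blast
      with \<open>i < p * (d + 1)\<close> have "c \<le> d"
        using mult_less_cancel1[of p c "d + 1"] by simp
      show ?thesis
      proof (cases "c = d")
        case True
        with \<open>i = p * c\<close> have "i = p * d"
          by simp
        then show ?thesis
          by (rule that(3))
      next
        case False
        with \<open>c \<le> d\<close> have "c < d"
          by simp
        with \<open>i = p * c\<close> show ?thesis
          by (rule that(2))
      qed
    next
      case False
      then show ?thesis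
        by (rule that(1))
    qed
    then show "(if p dvd i then s choose (i div p) else 0) * (s0 choose (?r - i))
        = (if i = p * d then (s choose d) * (s0 choose d0) else 0)"
    proof cases
      case 1
      then have "i \<noteq> p * d"
        by auto
      with 1 show ?thesis
        by simp
    next
      case (2 c)
      then have "?r - i = p * (d - c) + d0"
        by (simp add: diff_mult_distrib2)
      moreover have "p * (d - c) \<ge> p"
        using \<open>c < d\<close> by (simp add: Suc_le_eq)
      ultimately have "?r - i > s0"
        using assms(2) by linarith
      with 2 \<open>p > 0\<close> show ?thesis
        by (simp add: binomial_eq_0)
    next
      case 3
      with \<open>p > 0\<close> show ?thesis
        by simp
    qed
  qed
  also have "\<dots> = (s choose d) * (s0 choose d0)"
    by simp
  finally show ?thesis .
qed

lemma prime_not_dvd_choose_less: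
  fixes p s d :: nat
  assumes "prime p" and "d \<le> s" and "s < p"
  shows "\<not> p dvd s choose d"
proof
  assume "p dvd s choose d"
  moreover have "s choose d dvd fact s"
    using binomial_fact_lemma[OF assms(2)] by (metis dvd_triv_right)
  ultimately have "p dvd fact s"
    by (rule dvd_trans)
  with assms show False
    using prime_dvd_fact_iff by auto
qed

lemma prime_not_dvd_choose_digit:
  fixes p s s0 d d0 :: nat
  assumes "prime p" and "\<not> p dvd s choose d" and "d0 \<le> s0" and "s0 < p"
  shows "\<not> p dvd (p * s + s0) choose (p * d + d0)"
proof -
  have "\<not> p dvd (s choose d) * (s0 choose d0)"
    using assms prime_not_dvd_choose_less by (simp add: prime_dvd_mult_iff)
  moreover have "[(p * s + s0) choose (p * d + d0) = (s choose d) * (s0 choose d0)] (mod p)"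
    using assms by (intro choose_prime_digit_cong) simp_all
  ultimately show ?thesis
    using cong_dvd_iff by blast
qed

section \<open>Counting binomial coefficients not divisible by a prime\<close>

definition nonzero_binomials_mod :: "nat \<Rightarrow> nat \<Rightarrow> (nat \<times> nat) set" where
  "nonzero_binomials_mod p j = {(s, d). s < p ^ j \<and> \<not> p dvd s choose d}"

lemma nonzero_binomials_mod_subset: "nonzero_binomials_mod p j \<subseteq> {..<p ^ j} \<times> {..<p ^ j}"
  unfolding nonzero_binomials_mod_def by (fastforce dest: le_if_not_dvd_choose)

lemma finite_nonzero_binomials_mod: "finite (nonzero_binomials_mod p j)"
  using nonzero_binomials_mod_subset by (rule finite_subset) simp

lemma card_strict_lower_pairs: "2 * card {(s, d::nat). d < s \<and> s < p} = p * (p - 1)"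
proof -
  have "{(s, d::nat). d < s \<and> s < p} = Sigma {..<p} (\<lambda>s. {..<s})"
    by auto
  then have "2 * card {(s, d::nat). d < s \<and> s < p} = 2 * (\<Sum>s<p. s)"
    by (simp add: card_SigmaI)
  also have "2 * (\<Sum>s<p. s) = p * (p - 1)"
  proof (cases p)
    case (Suc m)
    then have "{..<p} = {0..m}"
      by auto
    with Suc show ?thesis
      using double_gauss_sum[of m, where 'a = nat] by simp
  qed simp
  finally show ?thesis .
qed

lemma mult_add_digit_eq_iff:
  fixes p s t s0 t0 :: nat
  assumes "s0 < p" and "t0 < p"
  shows "p * s + s0 = p * t + t0 \<longleftrightarrow> s = t \<and> s0 = t0"
proof
  assume eq: "p * s + s0 = p * t + t0"
  have "p > 0"
    using assms by simp
  show "s = t \<and> s0 = t0"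
    using arg_cong[OF eq, of "\<lambda>x. x div p"] arg_cong[OF eq, of "\<lambda>x. x mod p"] assms \<open>p > 0\<close>
    by simp
qed simp

text \<open>Appending base-\<open>p\<close> digits \<open>d\<^sub>0 < s\<^sub>0 < p\<close> preserves non-divisibility, by Lucas' theorem.\<close>
lemma card_nonzero_binomials_mod_ge:
  assumes "prime p"
  shows "card {(s, d::nat). d < s \<and> s < p} ^ j \<le> card (nonzero_binomials_mod p j)"
proof (induction j)
  case 0
  have "(0, 0) \<in> nonzero_binomials_mod p 0"
    using prime_gt_1_nat[OF assms] by (simp add: nonzero_binomials_mod_def)
  then show ?case
    using finite_nonzero_binomials_mod[of p 0] by (auto simp: Suc_le_eq card_gt_0_iff)
next
  case (Suc j)
  let ?D = "{(s, d::nat). d < s \<and> s < p}"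
  let ?append_digits = "\<lambda>((s, d), (s0, d0)). (p * s + s0, p * d + d0)"
  have inj: "inj_on ?append_digits (nonzero_binomials_mod p j \<times> ?D)"
    by (rule inj_onI) (auto simp: mult_add_digit_eq_iff)
  have sub: "?append_digits ` (nonzero_binomials_mod p j \<times> ?D) \<subseteq> nonzero_binomials_mod p (Suc j)"
  proof clarsimp
    fix s d s0 d0
    assume "(s, d) \<in> nonzero_binomials_mod p j" "d0 < s0" "s0 < p"
    then have "s < p ^ j" "\<not> p dvd s choose d"
      by (simp_all add: nonzero_binomials_mod_def)
    have "p * s + s0 < p * (s + 1)"
      using \<open>s0 < p\<close> by simp
    also have "\<dots> \<le> p * p ^ j"
      using \<open>s < p ^ j\<close> by (intro mult_le_mono2) simp
    also have "\<dots> = p ^ Suc j"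
      by simp
    finally have "p * s + s0 < p ^ Suc j" .
    with \<open>\<not> p dvd s choose d\<close> \<open>d0 < s0\<close> \<open>s0 < p\<close> assms
    show "(p * s + s0, p * d + d0) \<in> nonzero_binomials_mod p (Suc j)"
      by (simp add: nonzero_binomials_mod_def prime_not_dvd_choose_digit)
  qed
  have "card ?D ^ Suc j \<le> card (nonzero_binomials_mod p j) * card ?D"
    using Suc.IH by simp
  also have "\<dots> = card (?append_digits ` (nonzero_binomials_mod p j \<times> ?D))"
    by (simp add: card_image[OF inj] card_cartesian_product)
  also have "\<dots> \<le> card (nonzero_binomials_mod p (Suc j))"
    by (rule card_mono[OF finite_nonzero_binomials_mod sub])
  finally show ?case .
qed

lemma card_nonzero_binomials_mod_lower_bound:
  assumes "prime p"
  shows "(real p * (real p - 1) / 2) ^ j \<le> real (card (nonzero_binomials_mod p j))"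
proof -
  have "p \<ge> 1"
    using prime_gt_0_nat[OF assms] by simp
  then have "2 * real (card {(s, d::nat). d < s \<and> s < p}) = real p * (real p - 1)"
    using arg_cong[OF card_strict_lower_pairs[of p], of real] by (simp add: of_nat_diff)
  then have card_eq: "real (card {(s, d::nat). d < s \<and> s < p}) = real p * (real p - 1) / 2"
    by linarith
  have "(real p * (real p - 1) / 2) ^ j = real (card {(s, d::nat). d < s \<and> s < p} ^ j)"
    by (simp only: of_nat_power card_eq)
  also have "\<dots> \<le> real (card (nonzero_binomials_mod p j))"
    using card_nonzero_binomials_mod_ge[OF assms] by (simp only: of_nat_le_iff)
  finally show ?thesis .
qed

section \<open>Determinants\<close>

text \<open>Modulo \<open>p\<close> the matrix is block triangular (rows with \<open>P\<close> before the others), so only the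
  identity permutation contributes a term of \<open>det M\<close> that is nonzero mod \<open>p\<close>.\<close>
lemma det_nonzero_if_triangular_mod_prime:
  fixes M :: "int mat" and p :: int
  assumes M: "M \<in> carrier_mat m m" and "prime p"
    and off_diag: "\<And>i j. i < m \<Longrightarrow> j < m \<Longrightarrow> i \<noteq> j \<Longrightarrow> \<not> (P i \<and> \<not> P j) \<Longrightarrow> p dvd M $$ (i, j)"
    and diag: "\<And>i. i < m \<Longrightarrow> \<not> p dvd M $$ (i, i)"
  shows "det M \<noteq> 0"
proof
  assume "det M = 0"
  let ?term = "\<lambda>\<sigma>. signof \<sigma> * (\<Prod>i = 0..<m. M $$ (i, \<sigma> i))"
  have dvd_term: "p dvd ?term \<sigma>" if \<sigma>: "\<sigma> permutes {0..<m}" and "\<sigma> \<noteq> id" for \<sigma>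
  proof -
    obtain i where "\<sigma> i \<noteq> i"
      using \<open>\<sigma> \<noteq> id\<close> by (auto simp: fun_eq_iff)
    then have "i < m"
      using \<sigma> by (meson atLeastLessThan_iff permutes_not_in zero_le)
    let ?j = "\<sigma> i"
    have "?j < m" and "\<sigma> ?j < m"
      using \<sigma> \<open>i < m\<close> by (simp_all add: permutes_in_image)
    have "\<sigma> ?j \<noteq> ?j"
      using \<open>\<sigma> i \<noteq> i\<close> by (simp add: inj_eq[OF permutes_inj[OF \<sigma>]])
    obtain l where "l < m" "p dvd M $$ (l, \<sigma> l)"
      using off_diag[OF \<open>i < m\<close> \<open>?j < m\<close> \<open>\<sigma> i \<noteq> i\<close>[symmetric]]
        off_diag[OF \<open>?j < m\<close> \<open>\<sigma> ?j < m\<close> \<open>\<sigma> ?j \<noteq> ?j\<close>[symmetric]] \<open>i < m\<close> \<open>?j < m\<close>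
      by blast
    moreover have "M $$ (l, \<sigma> l) dvd (\<Prod>i = 0..<m. M $$ (i, \<sigma> i))"
      using \<open>l < m\<close> by (intro dvd_prodI) simp_all
    ultimately have "p dvd (\<Prod>i = 0..<m. M $$ (i, \<sigma> i))"
      by (blast intro: dvd_trans)
    then show ?thesis
      by simp
  qed
  have "det M = ?term id + (\<Sum>\<sigma>\<in>{\<sigma>. \<sigma> permutes {0..<m}} - {id}. ?term \<sigma>)"
    unfolding det_def'[OF M]
    by (subst sum.remove[of _ id]) (auto simp: finite_permutations permutes_id)
  with \<open>det M = 0\<close> have "?term id = - (\<Sum>\<sigma>\<in>{\<sigma>. \<sigma> permutes {0..<m}} - {id}. ?term \<sigma>)"
    by linarith
  moreover have "p dvd (\<Sum>\<sigma>\<in>{\<sigma>. \<sigma> permutes {0..<m}} - {id}. ?term \<sigma>)"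
    using dvd_term by (intro dvd_sum) auto
  ultimately have "p dvd ?term id"
    by (simp only: dvd_minus_iff)
  then have "p dvd (\<Prod>i = 0..<m. M $$ (i, i))"
    by (simp add: sign_id)
  with \<open>prime p\<close> obtain i where "i < m" "p dvd M $$ (i, i)"
    by (auto simp: prime_dvd_prod_iff)
  with diag show False
    by blast
qed

lemma det_mat_sum_mult_eq_0:
  fixes a b :: "nat \<Rightarrow> nat \<Rightarrow> 'a :: comm_ring_1"
  assumes "N < m"
  shows "det (mat m m (\<lambda>(i, j). \<Sum>t<N. a i t * b t j)) = 0"
proof -
  define A where "A = mat m m (\<lambda>(i, t). if t < N then a i t else 0)"
  define B where "B = mat m m (\<lambda>(t, j). if t < N then b t j else 0)"
  have A: "A \<in> carrier_mat m m" and B: "B \<in> carrier_mat m m"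
    by (simp_all add: A_def B_def)
  have "mat m m (\<lambda>(i, j). \<Sum>t<N. a i t * b t j) = A * B"
  proof (rule eq_matI)
    fix i j
    assume "i < dim_row (A * B)" "j < dim_col (A * B)"
    then have "i < m" "j < m"
      using A B by simp_all
    have "(A * B) $$ (i, j) = (\<Sum>t\<in>{0..<m}. if t < N then a i t * b t j else 0)"
      using \<open>i < m\<close> \<open>j < m\<close> A B by (auto simp: A_def B_def scalar_prod_def intro!: sum.cong)
    also have "\<dots> = (\<Sum>t<N. a i t * b t j)"
    proof -
      have "{0..<m} \<inter> {t. t < N} = {..<N}"
        using \<open>N < m\<close> by auto
      then show ?thesis
        by (simp add: sum.If_cases)
    qed
    finally show "mat m m (\<lambda>(i, j). \<Sum>t<N. a i t * b t j) $$ (i, j) = (A * B) $$ (i, j)"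
      using \<open>i < m\<close> \<open>j < m\<close> by simp
  qed (use A B in simp_all)
  moreover have "det B = 0"
  proof -
    have "(\<Prod>i = 0..<m. B $$ (i, \<sigma> i)) = 0" if "\<sigma> permutes {0..<m}" for \<sigma>
    proof (rule prod_zero)
      show "\<exists>i\<in>{0..<m}. B $$ (i, \<sigma> i) = 0"
        using \<open>N < m\<close> permutes_in_image[OF that, of "m - 1"] by (intro bexI[of _ "m - 1"]) (auto simp: B_def)
    qed simp
    then show ?thesis
      unfolding det_def'[OF B] by simp
  qed
  ultimately show ?thesis
    using det_mult[OF A B] by simp
qed

section \<open>The rank bound\<close>

lemma card_subsets_card_le:
  assumes "finite U"
  shows "card {S. S \<subseteq> U \<and> card S \<le> d} = (\<Sum>i=0..d. card U choose i)"
proof -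
  have "{S. S \<subseteq> U \<and> card S \<le> d} = (\<Union>i\<in>{0..d}. {S. S \<subseteq> U \<and> card S = i})"
    by auto
  also have "card \<dots> = (\<Sum>i=0..d. card {S. S \<subseteq> U \<and> card S = i})"
    using assms by (intro card_UN_disjoint) auto
  finally show ?thesis
    using n_subsets[OF assms] by simp
qed

text \<open>Vandermonde's identity with \<open>card Y choose j\<close> expanded as a count of \<open>j\<close>-subsets of \<open>Y\<close>.\<close>
lemma choose_card_add_eq_sum_subsets:
  fixes U Y :: "'a set"
  assumes "finite U" and "Y \<subseteq> U"
  shows "(card Y + s) choose d =
    (\<Sum>S\<in>{S. S \<subseteq> U \<and> card S \<le> d}. if S \<subseteq> Y then s choose (d - card S) else 0)"
proof -
  have "finite Y"
    using assms finite_subset by blast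
  have "(card Y + s) choose d = (\<Sum>j\<le>d. (card Y choose j) * (s choose (d - j)))"
    by (rule vandermonde[symmetric])
  also have "\<dots> = (\<Sum>j\<le>d. \<Sum>S\<in>{S. S \<subseteq> Y \<and> card S = j}. s choose (d - card S))"
    using n_subsets[OF \<open>finite Y\<close>] by simp
  also have "\<dots> = (\<Sum>S\<in>(\<Union>j\<le>d. {S. S \<subseteq> Y \<and> card S = j}). s choose (d - card S))"
    using \<open>finite Y\<close> by (intro sum.UNION_disjoint[symmetric]) auto
  also have "(\<Union>j\<le>d. {S. S \<subseteq> Y \<and> card S = j}) = {S. S \<subseteq> U \<and> card S \<le> d} \<inter> {S. S \<subseteq> Y}"
    using assms(2) by auto
  also have "(\<Sum>S\<in>\<dots>. s choose (d - card S))
      = (\<Sum>S\<in>{S. S \<subseteq> U \<and> card S \<le> d}. if S \<subseteq> Y then s choose (d - card S) else 0)"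
    using assms(1) by (simp add: sum.inter_restrict)
  finally show ?thesis .
qed

text \<open>The matrix \<open>(card (X i - Z j) + s) choose d\<close> factors through the subsets of \<open>U\<close> of size at
  most \<open>d\<close>: it is the product of the incidence of \<open>S \<subseteq> X i\<close>, weighted by \<open>s choose (d - card S)\<close>,
  with the disjointness incidence of \<open>S\<close> and \<open>Z j\<close>.\<close>
lemma det_choose_card_diff_eq_0:
  fixes U :: "'a set" and X Z :: "nat \<Rightarrow> 'a set"
  assumes "finite U" and X: "\<And>i. i < m \<Longrightarrow> X i \<subseteq> U" and "(\<Sum>i=0..d. card U choose i) < m"
  shows "det (mat m m (\<lambda>(i, j). int ((card (X i - Z j) + s) choose d))) = 0"
proof -
  define \<S> where "\<S> = {S. S \<subseteq> U \<and> card S \<le> d}"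
  have "finite \<S>"
    using assms(1) by (simp add: \<S>_def)
  then obtain h where h: "bij_betw h {..<card \<S>} \<S>"
    using ex_bij_betw_nat_finite lessThan_atLeast0 by metis
  define a where "a i t = (if h t \<subseteq> X i then int (s choose (d - card (h t))) else 0)" for i t
  define b where "b t j = (if h t \<inter> Z j = {} then 1 else 0 :: int)" for t j
  have "mat m m (\<lambda>(i, j). int ((card (X i - Z j) + s) choose d))
      = mat m m (\<lambda>(i, j). \<Sum>t<card \<S>. a i t * b t j)"
  proof (rule cong_mat[OF refl refl])
    fix i j
    assume "i < m" "j < m"
    have "X i - Z j \<subseteq> U"
      using X[OF \<open>i < m\<close>] by blast
    then have "int ((card (X i - Z j) + s) choose d)
        = int (\<Sum>S\<in>\<S>. if S \<subseteq> X i - Z j then s choose (d - card S) else 0)"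
      using choose_card_add_eq_sum_subsets[OF assms(1)] by (simp add: \<S>_def)
    also have "\<dots> = (\<Sum>S\<in>\<S>. if S \<subseteq> X i - Z j then int (s choose (d - card S)) else 0)"
      by (auto simp: of_nat_sum intro!: sum.cong)
    also have "\<dots> = (\<Sum>t<card \<S>. a i t * b t j)"
      unfolding sum.reindex_bij_betw[OF h, symmetric] a_def b_def
      by (intro sum.cong) auto
    finally show "(\<lambda>(i, j). int ((card (X i - Z j) + s) choose d)) (i, j)
        = (\<lambda>(i, j). \<Sum>t<card \<S>. a i t * b t j) (i, j)"
      by simp
  qed
  also have "det \<dots> = 0"
    using assms(3) card_subsets_card_le[OF assms(1)] by (intro det_mat_sum_mult_eq_0) (simp add: \<S>_def)
  finally show ?thesis .
qed

section \<open>Intervals with the Sperner bound\<close>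

definition has_sperner_bound :: "nat \<Rightarrow> nat \<Rightarrow> nat set \<Rightarrow> bool" where
  "has_sperner_bound n q L \<longleftrightarrow>
     (\<forall>F. F \<subseteq> Pow {1..n} \<and> modular_L_differencing_Sperner q L F \<longrightarrow>
        card F \<le> (\<Sum>i=0..card L. (n - 1) choose i))"

lemma card_le_sum_choose_if_card_diff_shift_mod_less:
  fixes F :: "nat set set" and p k n s d :: nat
  assumes "prime p" and "n > 0" and "F \<subseteq> Pow {1..n}"
    and diff: "\<And>A B. A \<in> F \<Longrightarrow> B \<in> F \<Longrightarrow> A \<noteq> B \<Longrightarrow> (card (A - B) + s) mod p ^ k < d"
    and "d < p ^ k" and "\<not> p dvd s choose d"
  shows "card F \<le> (\<Sum>i=0..d. (n - 1) choose i)"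
proof (rule ccontr)
  assume "\<not> ?thesis"
  then have many: "(\<Sum>i=0..d. card {1..n - 1} choose i) < card F"
    by simp
  have "finite F"
    using assms(3) by (rule finite_subset) simp
  then obtain f where f: "bij_betw f {0..<card F} F"
    using ex_bij_betw_nat_finite by blast
  have f_in: "f i \<in> F" if "i < card F" for i
    using bij_betw_apply[OF f] that by simp
  have f_inj: "f i \<noteq> f j" if "i < card F" "j < card F" "i \<noteq> j" for i j
    using bij_betw_imp_inj_on[OF f] that by (simp add: inj_on_eq_iff)
  let ?M = "mat (card F) (card F) (\<lambda>(i, j). int ((card (f i - {n} - f j) + s) choose d))"
  have "det ?M = 0"
  proof (rule det_choose_card_diff_eq_0[OF _ _ many])
    show "f i - {n} \<subseteq> {1..n - 1}" if "i < card F" for i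
    proof -
      have "f i \<subseteq> {1..n}"
        using f_in[OF that] assms(3) by blast
      then show ?thesis
        by auto
    qed
  qed simp
  moreover have "det ?M \<noteq> 0"
  proof (rule det_nonzero_if_triangular_mod_prime[where P = "\<lambda>i. n \<in> f i"])
    fix i j
    assume ij: "i < card F" "j < card F" "i \<noteq> j" and "\<not> (n \<in> f i \<and> n \<notin> f j)"
    then have "f i - {n} - f j = f i - f j"
      by auto
    moreover have "p dvd (card (f i - f j) + s) choose d"
      using diff[OF f_in f_in f_inj[OF ij]] ij
      by (intro prime_dvd_choose_if_mod_less[OF assms(1) _ assms(5)]) simp_all
    ultimately show "int p dvd ?M $$ (i, j)"
      using ij by simp
  next
    fix i
    assume "i < card F"
    moreover have "f i - {n} - f i = {}"
      by blast
    then have "card (f i - {n} - f i) = 0"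
      by (simp only: card.empty)
    ultimately show "\<not> int p dvd ?M $$ (i, i)"
      using assms(6) by simp
  qed (use assms(1) in simp_all)
  ultimately show False
    by contradiction
qed

text \<open>Adding \<open>s\<close> moves \<open>L = {q - s..q - s + d - 1}\<close> onto the residues \<open>{0..d - 1}\<close> mod \<open>q\<close>.\<close>
lemma has_sperner_bound_shifted_interval:
  fixes p k n s d :: nat
  assumes "prime p" and "n > 0" and "s < p ^ k" and "0 < d" and "\<not> p dvd s choose d"
  shows "has_sperner_bound n (p ^ k) {p ^ k - s..p ^ k - s + d - 1}"
  unfolding has_sperner_bound_def
proof (intro allI impI, elim conjE)
  fix F
  assume F: "F \<subseteq> Pow {1..n}" and sperner: "modular_L_differencing_Sperner (p ^ k) {p ^ k - s..p ^ k - s + d - 1} F"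
  let ?q = "p ^ k" and ?a = "p ^ k - s"
  have "d \<le> s"
    using assms(5) by (rule le_if_not_dvd_choose)
  have "(card (A - B) + s) mod ?q < d" if AB: "A \<in> F" "B \<in> F" "A \<noteq> B" for A B
  proof -
    obtain l where l: "l \<in> {?a..?a + d - 1}" and "card (A - B) mod ?q = l mod ?q"
      using sperner[unfolded modular_L_differencing_Sperner_def, rule_format, OF AB] by blast
    have "l < ?q"
      using l \<open>d \<le> s\<close> assms(3) by (simp, arith)
    have "(card (A - B) + s) mod ?q = (card (A - B) mod ?q + s) mod ?q"
      by (simp add: mod_add_left_eq)
    also have "\<dots> = (l + s) mod ?q"
      using \<open>card (A - B) mod ?q = l mod ?q\<close> \<open>l < ?q\<close> by simp
    also have "l + s = (l - ?a) + ?q"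
      using l assms(3) by (simp, arith)
    also have "(l - ?a + ?q) mod ?q = l - ?a"
      using \<open>l < ?q\<close> by simp
    also have "l - ?a < d"
      using l assms(4) by auto
    finally show ?thesis .
  qed
  then have "card F \<le> (\<Sum>i=0..d. (n - 1) choose i)"
    using \<open>d \<le> s\<close> assms by (intro card_le_sum_choose_if_card_diff_shift_mod_less[OF assms(1,2) F]) auto
  moreover have "card {?a..?a + d - 1} = d"
    using assms(3,4) by simp
  ultimately show "card F \<le> (\<Sum>i=0..card {?a..?a + d - 1}. (n - 1) choose i)"
    by simp
qed

lemma card_nonzero_binomials_mod_le_card_intervals:
  fixes p k n :: nat
  assumes "prime p" and "n > 0"
  shows "card (nonzero_binomials_mod p k)
    \<le> card {L. is_interval L \<and> L \<subseteq> {1..p ^ k - 1} \<and> has_sperner_bound n (p ^ k) L} + p ^ k"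
proof -
  let ?q = "p ^ k"
  let ?good = "{L. is_interval L \<and> L \<subseteq> {1..?q - 1} \<and> has_sperner_bound n ?q L}"
  let ?pos = "{(s, d) \<in> nonzero_binomials_mod p k. 0 < d}"
  let ?interval = "\<lambda>(s, d). {?q - s..?q - s + d - 1}"
  have "?interval x \<in> ?good" if "x \<in> ?pos" for x
  proof -
    obtain s d where x: "x = (s, d)"
      by fastforce
    have "s < ?q" "\<not> p dvd s choose d" "0 < d"
      using that by (simp_all add: x nonzero_binomials_mod_def)
    have "d \<le> s"
      using \<open>\<not> p dvd s choose d\<close> by (rule le_if_not_dvd_choose)
    have "?q - s \<le> ?q - s + d - 1"
      using \<open>0 < d\<close> by simp
    then have "is_interval {?q - s..?q - s + d - 1}"
      unfolding is_interval_def by blast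
    moreover have "{?q - s..?q - s + d - 1} \<subseteq> {1..?q - 1}"
      using \<open>s < ?q\<close> \<open>d \<le> s\<close> by auto
    ultimately show ?thesis
      using has_sperner_bound_shifted_interval[OF assms \<open>s < ?q\<close> \<open>0 < d\<close> \<open>\<not> p dvd s choose d\<close>]
      by (simp add: x)
  qed
  then have "?interval ` ?pos \<subseteq> ?good"
    by (rule image_subsetI)
  moreover have "inj_on ?interval ?pos"
    by (rule inj_onI) (auto simp: nonzero_binomials_mod_def Icc_eq_Icc)
  moreover have "finite ?good"
    by (rule finite_subset[of _ "Pow {1..?q - 1}"]) auto
  ultimately have "card ?pos \<le> card ?good"
    by (intro card_inj_on_le)
  have "nonzero_binomials_mod p k \<subseteq> ?pos \<union> {..<?q} \<times> {0}"
    by (auto simp: nonzero_binomials_mod_def)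
  then have "card (nonzero_binomials_mod p k) \<le> card (?pos \<union> {..<?q} \<times> {0})"
    by (intro card_mono) (auto intro: finite_subset[OF _ finite_nonzero_binomials_mod])
  also have "\<dots> \<le> card ?pos + card ({..<?q} \<times> {0::nat})"
    by (rule card_Un_le)
  also have "card ({..<?q} \<times> {0::nat}) = ?q"
    by (simp add: card_cartesian_product)
  finally show ?thesis
    using \<open>card ?pos \<le> card ?good\<close> by linarith
qed

theorem mainTheorem13:
  fixes n p k q :: nat
  assumes "n > 0" and "prime p" and "k \<ge> 2" and "q = p ^ k"
  shows "real (card {L. is_interval L \<and> L \<subseteq> {1..q - 1} \<and>
            (\<forall>F. F \<subseteq> Pow {1..n} \<and> modular_L_differencing_Sperner q L F \<longrightarrow>
                 card F \<le> (\<Sum>i=0..card L. (n - 1) choose i))})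
         \<ge> real p ^ k * (real p - 1) ^ k / 2 ^ k - real q"
proof -
  have "real p ^ k * (real p - 1) ^ k / 2 ^ k = (real p * (real p - 1) / 2) ^ k"
    by (simp add: power_divide power_mult_distrib)
  also have "\<dots> \<le> real (card (nonzero_binomials_mod p k))"
    by (rule card_nonzero_binomials_mod_lower_bound[OF assms(2)])
  also have "\<dots> \<le> real (card {L. is_interval L \<and> L \<subseteq> {1..q - 1} \<and> has_sperner_bound n q L} + q)"
    using card_nonzero_binomials_mod_le_card_intervals[OF assms(2,1), of k] assms(4)
    by (simp only: of_nat_le_iff)
  finally show ?thesis
    by (simp add: has_sperner_bound_def)
qed

end
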